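(* In the calculus described in the context, for every well-typed expression $e:A\leadsto B$ (in which every user-defined operation carries a consistent incrementalization, and every occurrence of $+$ is at a type $A$ with $[\![A]\!]=[\![A]\!]'$ and with $\oplus$ associative and commutative on $[\![A]\!]$), the triple $(C_e,i_e,d_e)$ produced by the incrementalization transformation is a consistent incrementalization of the denotation $[\![e]\!]:[\![A]\!]\to[\![B]\!]$, i.e. for all $x\in[\![A]\!]$, $x'\in[\![A]\!]'$: $(i_e\,x)_1=[\![e]\!]\,x$; $[\![e]\!](x\oplus x')=[\![e]\!]\,x\oplus(d_e\,x'\,(i_e\,x)_2)_1$; and $(i_e(x\oplus x'))_2=(d_e\,x'\,(i_e\,x)_2)_2$.
   Context: Fix a container: a type $S$ of shapes and for each $s:S$ an index type $\mathrm{Pos}(s)$ with decidable equality. Fix a base change structure $(\beta,\beta',\oplus,\ominus)$ with $x\oplus(y\ominus x)=y$. Object types: $A,B::=\mathsf{b}\mid F_sA\mid A\times B\mid A+B$. Value types/change types and $\oplus,\ominus$: $[\![\mathsf b]\!]=\beta$, $[\![\mathsf b]\!]'=\beta'$; $[\![F_sA]\!]=\mathrm{Pos}(s)\to[\![A]\!]$, $[\![F_sA]\!]'=\mathrm{Pos}(s)\to[\![A]\!]'$ (pointwise $\oplus,\ominus$); products componentwise; $[\![A+B]\!]=[\![A]\!]+[\![B]\!]$ (injections $\iota_1,\iota_2$) and $[\![A+B]\!]'$ has constructors $\mathsf{cl}\,a',\mathsf{cr}\,b',\mathsf{sl}\,a,\mathsf{sr}\,b,\mathsf{null}$ ($a'\in[\![A]\!]',b'\in[\![B]\!]',a\in[\![A]\!],b\in[\![B]\!]$)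 with $\iota_1x\oplus\mathsf{cl}x'=\iota_1(x\oplus x')$, $\iota_1x\oplus\mathsf{cr}y'=\iota_1x$, $\iota_2y\oplus\mathsf{cl}x'=\iota_2y$, $\iota_2y\oplus\mathsf{cr}y'=\iota_2(y\oplus y')$, $z\oplus\mathsf{sl}x=\iota_1x$, $z\oplus\mathsf{sr}y=\iota_2y$, $z\oplus\mathsf{null}=z$; $\iota_1x\ominus\iota_1y=\mathsf{cl}(x\ominus y)$, $\iota_1x\ominus\iota_2y=\mathsf{sl}x$, $\iota_2x\ominus\iota_1y=\mathsf{sr}x$, $\iota_2x\ominus\iota_2y=\mathsf{cr}(x\ominus y)$. An incrementalization of $f:[\![A]\!]\to[\![B]\!]$ is a triple $(C,i,d)$, $C$ a type, $i:[\![A]\!]\to[\![B]\!]\times C$, $d:[\![A]\!]'\to C\to[\![B]\!]'\times C$. A user-defined operation $o:\mathsf{Op}\,A\,B$ is a function $f_o:[\![A]\!]\to[\![B]\!]$ together with a consistent incrementalization of $f_o$ (consistency meaning the three laws in the claim). Expressions, typing and denotation ($s,s_1,s_2:S$; $i:\mathrm{Pos}(s)$; $r:\mathrm{Pos}(s_2)\to\mathrm{Pos}(s_1)$; $p:\mathrm{Pos}(s)\to\mathbb B$; $c\in[\![A]\!]$): $e_1;e_2:A\leadsto C$ for $e_1:A\leadsto B,e_2:B\leadsto C$, $[\![e_1;e_2]\!]x=[\![e_2]\!]([\![e_1]\!]x)$; $e_1\times e_2:A\times C\leadsto B\times D$, $(x,y)\mapsto([\![e_1]\!]x,[\![e_2]\!]y)$;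 $\mathsf{id}:A\leadsto A$; $\mathsf{dup}:A\leadsto A\times A$, $x\mapsto(x,x)$; $\mathsf{fst},\mathsf{snd}$ projections; $\mathsf{cst}\,c:B\leadsto A$, $x\mapsto c$; $+:A\times A\leadsto A$, $(x,y)\mapsto x\oplus y$ (only when $[\![A]\!]=[\![A]\!]'$); $\mathsf{op}\,o:A\leadsto B$, $[\![\mathsf{op}\,o]\!]=f_o$; $\mathsf{map}\,e:F_sA\leadsto F_sB$, $x\mapsto\lambda i.[\![e]\!](x\,i)$; $\mathsf{zip}:F_sA\times F_sB\leadsto F_s(A\times B)$, $(x,y)\mapsto\lambda i.(x\,i,y\,i)$; $\mathsf{get}\,i:F_sA\leadsto A$, $x\mapsto x\,i$; $\mathsf{set}\,i:A\times F_sA\leadsto F_sA$, $(x,a)\mapsto\lambda j.\,\mathsf{if}\ i=j\ \mathsf{then}\ x\ \mathsf{else}\ a\,j$; $\mathsf{reshape}\,r:F_{s_1}A\leadsto F_{s_2}A$, $x\mapsto\lambda i.x(r\,i)$; $\mathsf{replicate}\,s:A\leadsto F_sA$, $x\mapsto\lambda i.x$; $\mathsf{tp}:F_{s_1}(F_{s_2}A)\leadsto F_{s_2}(F_{s_1}A)$, $x\mapsto\lambda i\lambda j.\,x\,j\,i$; $\mathsf{filter}\,p:A\times F_sA\leadsto F_sA$, $(x,a)\mapsto\lambda i.\,\mathsf{if}\ p\,i\ \mathsf{then}\ a\,i\ \mathsf{else}\ x$; $\mathsf{inl}:A\leadsto A+B$, $\mathsf{inr}:B\leadsto A+B$; $\mathsf{fuse}:A+A\leadsto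 A$, $\iota_kx\mapsto x$; $\mathsf{distr}:A\times(B+C)\leadsto A\times B+A\times C$, $(x,\iota_ky)\mapsto\iota_k(x,y)$; $e_1\|e_2:A+C\leadsto B+D$, $\iota_1x\mapsto\iota_1([\![e_1]\!]x)$, $\iota_2x\mapsto\iota_2([\![e_2]\!]x)$ (the paper prints these last two without the injections). Incrementalization transformation $e\mapsto(C_e,i_e,d_e)$: • For $e\in\{\mathsf{id},\mathsf{dup},\mathsf{fst},\mathsf{snd},\mathsf{zip},\mathsf{tp},\mathsf{get}\,i,\mathsf{set}\,i,\mathsf{reshape}\,r,\mathsf{replicate}\,s,\mathsf{filter}\,p\}$: $C_e=\mathsf{Unit}$, $i_e\,x=([\![e]\!]x,\star)$, $d_e\,x'\,\star=(e\text{'s defining equation evaluated on the change }x',\star)$ (e.g. $d_{\mathsf{dup}}x'\star=((x',x'),\star)$). For $\mathsf{inl}$/$\mathsf{inr}$: $C=\mathsf{Unit}$, $i\,x=(\iota_kx,\star)$, $d_{\mathsf{inl}}x'\star=(\mathsf{cl}\,x',\star)$, $d_{\mathsf{inr}}y'\star=(\mathsf{cr}\,y',\star)$. • $\mathsf{cst}\,c$: $C=\mathsf{Unit}$, $i\,x=(c,\star)$, $d\,x'\,\star=(c\ominus c,\star)$. • $+$: $C=\mathsf{Unit}$, $i(x,y)=(x\oplus y,\star)$, $d(x',y')\star=(x'\oplus y',\star)$. • $\mathsf{op}\,o$: the given incrementalization of $o$. • $f;g$: $C=C_f\times C_g$, $i\,x=(z,(c_1,c_2))$ where $(y,c_1)=i_f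 x$, $(z,c_2)=i_g y$; $d\,x'(c_1,c_2)=(z',(c_1',c_2'))$ where $(y',c_1')=d_fx'c_1$, $(z',c_2')=d_gy'c_2$. • $f\times g$: $C=C_f\times C_g$, $i(x_1,x_2)=((y_1,y_2),(c_1,c_2))$ with $(y_1,c_1)=i_fx_1$, $(y_2,c_2)=i_gx_2$; $d(x_1',x_2')(c_1,c_2)=((y_1',y_2'),(c_1',c_2'))$ with $(y_k',c_k')$ from $d_f x_1'c_1$, $d_g x_2'c_2$. • $\mathsf{map}_s f$: $C=\mathrm{Pos}(s)\to C_f$, $i\,x=(\lambda j.(i_f(x\,j))_1,\lambda j.(i_f(x\,j))_2)$, $d\,x'\,c=(\lambda j.(d_f(x'j)(c\,j))_1,\lambda j.(d_f(x'j)(c\,j))_2)$. • $\mathsf{fuse}$: $C=[\![A]\!]+[\![A]\!]$, $i(\iota_kx)=(x,\iota_kx)$; $d(\mathsf{cl}x')(\iota_1x)=(x',\iota_1(x\oplus x'))$, $d(\mathsf{cr}y')(\iota_1x)=(x\ominus x,\iota_1x)$, $d(\mathsf{cl}x')(\iota_2y)=(y\ominus y,\iota_2y)$, $d(\mathsf{cr}y')(\iota_2y)=(y',\iota_2(y\oplus y'))$, $d(\mathsf{sl}x)(\iota_kx_0)=(x\ominus x_0,\iota_1x)$, $d(\mathsf{sr}y)(\iota_ky_0)=(y\ominus y_0,\iota_2y)$, $d\,\mathsf{null}(\iota_kx)=(x\ominus x,\iota_kx)$. • $\mathsf{distr}$: $C=[\![A]\!]\times([\![B]\!]+[\![C]\!])$,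 $i(x,\iota_ky)=(\iota_k(x,y),(x,\iota_ky))$; $d(x',\mathsf{cl}y')(x,\iota_1y)=(\mathsf{cl}(x',y'),(x\oplus x',\iota_1(y\oplus y')))$; $d(x',\mathsf{cr}y')(x,\iota_1y)=(\mathsf{cl}(x',y\ominus y),(x\oplus x',\iota_1y))$; $d(x',\mathsf{cl}y')(x,\iota_2y)=(\mathsf{cr}(x',y\ominus y),(x\oplus x',\iota_2y))$; $d(x',\mathsf{cr}y')(x,\iota_2y)=(\mathsf{cr}(x',y'),(x\oplus x',\iota_2(y\oplus y')))$; $d(x',\mathsf{sl}y)(x,\_)=(\mathsf{sl}(x\oplus x',y),(x\oplus x',\iota_1y))$; $d(x',\mathsf{sr}y)(x,\_)=(\mathsf{sr}(x\oplus x',y),(x\oplus x',\iota_2y))$; $d(x',\mathsf{null})(x,\iota_1y)=(\mathsf{cl}(x',y\ominus y),(x\oplus x',\iota_1y))$; $d(x',\mathsf{null})(x,\iota_2y)=(\mathsf{cr}(x',y\ominus y),(x\oplus x',\iota_2y))$. • $f\|g$ ($f:A_1\leadsto B_1$, $g:A_2\leadsto B_2$): $C=C_f\times[\![B_1]\!]+C_g\times[\![B_2]\!]$; $i(\iota_1x)=(\iota_1y,\iota_1(c,y))$ with $(y,c)=i_fx$, similarly for $\iota_2$ with $g$; $d(\mathsf{cl}x')(\iota_1(c,y))=(\mathsf{cl}y',\iota_1(c',y\oplus y'))$ with $(y',c')=d_fx'c$; $d(\mathsf{cr}x')(\iota_1(c,y))=(\mathsf{null},\iota_1(c,y))$; $d(\mathsf{cl}x')(\iota_2(c,y))=(\mathsf{null},\iota_2(c,y))$;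 $d(\mathsf{cr}x')(\iota_2(c,y))=(\mathsf{cr}y',\iota_2(c',y\oplus y'))$ with $(y',c')=d_gx'c$; $d(\mathsf{sl}x)(\iota_1(c_0,y_0))=(\mathsf{cl}(y\ominus y_0),\iota_1(c,y))$ and $d(\mathsf{sl}x)(\iota_2\_)=(\mathsf{sl}y,\iota_1(c,y))$ with $(y,c)=i_fx$; $d(\mathsf{sr}x)(\iota_1\_)=(\mathsf{sr}y,\iota_2(c,y))$ and $d(\mathsf{sr}x)(\iota_2(c_0,y_0))=(\mathsf{cr}(y\ominus y_0),\iota_2(c,y))$ with $(y,c)=i_gx$; $d\,\mathsf{null}\,z=(\mathsf{null},z)$. *)

theory Defs
  imports Main
begin

text \<open>Values, changes and caches all live in one universal datatype; the
  semantic types [[A]] and [[A]]' are carved out as sets.  Elements of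
  F_s A are functions Pos(s) -> [[A]], represented extensionally as
  functions on the ambient position type 'p that are VUnit outside Pos s.\<close>

record ('b, 's, 'p) setting =
  beta   :: "'b set"
  dbeta  :: "'b set"
  bplus  :: "'b \<Rightarrow> 'b \<Rightarrow> 'b"
  bminus :: "'b \<Rightarrow> 'b \<Rightarrow> 'b"
  pos    :: "'s \<Rightarrow> 'p set"

datatype 's ty = TB | TF 's "'s ty" | TProd "'s ty" "'s ty" | TSum "'s ty" "'s ty"

datatype ('b, 'p) v =
    VB 'b
  | VF "'p \<Rightarrow> ('b, 'p) v"
  | VP "('b, 'p) v" "('b, 'p) v"
  | VInl "('b, 'p) v" | VInr "('b, 'p) v"
  | VCl "('b, 'p) v" | VCr "('b, 'p) v" | VSl "('b, 'p) v" | VSr "('b, 'p) v" | VNull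
  | VUnit

fun vfst :: "('b, 'p) v \<Rightarrow> ('b, 'p) v" where
  "vfst (VP x y) = x" | "vfst _ = undefined"
fun vsnd :: "('b, 'p) v \<Rightarrow> ('b, 'p) v" where
  "vsnd (VP x y) = y" | "vsnd _ = undefined"
fun app :: "('b, 'p) v \<Rightarrow> 'p \<Rightarrow> ('b, 'p) v" where
  "app (VF g) i = g i" | "app _ i = undefined"

definition restr :: "('b, 's, 'p) setting \<Rightarrow> 's \<Rightarrow> ('p \<Rightarrow> ('b, 'p) v) \<Rightarrow> ('b, 'p) v" where
  "restr S s g = VF (\<lambda>i. if i \<in> pos S s then g i else VUnit)"

fun vals :: "('b, 's, 'p) setting \<Rightarrow> 's ty \<Rightarrow> ('b, 'p) v set" where
  "vals S TB = VB ` beta S"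
| "vals S (TF s A) = {VF g | g. (\<forall>i\<in>pos S s. g i \<in> vals S A) \<and> (\<forall>i. i \<notin> pos S s \<longrightarrow> g i = VUnit)}"
| "vals S (TProd A B) = {VP x y | x y. x \<in> vals S A \<and> y \<in> vals S B}"
| "vals S (TSum A B) = VInl ` vals S A \<union> VInr ` vals S B"

fun dvals :: "('b, 's, 'p) setting \<Rightarrow> 's ty \<Rightarrow> ('b, 'p) v set" where
  "dvals S TB = VB ` dbeta S"
| "dvals S (TF s A) = {VF g | g. (\<forall>i\<in>pos S s. g i \<in> dvals S A) \<and> (\<forall>i. i \<notin> pos S s \<longrightarrow> g i = VUnit)}"
| "dvals S (TProd A B) = {VP x y | x y. x \<in> dvals S A \<and> y \<in> dvals S B}"
| "dvals S (TSum A B) = VCl ` dvals S A \<union> VCr ` dvals S B \<union> VSl ` vals S A \<union> VSr ` vals S B \<union> {VNull}"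

text \<open>oplus and ominus, defined uniformly by structure (pointwise on F, componentwise on products,
  the given rules on sums; VUnit only occurs outside Pos s and as the unit cache).\<close>
primrec vplus :: "('b, 's, 'p) setting \<Rightarrow> ('b, 'p) v \<Rightarrow> ('b, 'p) v \<Rightarrow> ('b, 'p) v" where
  "vplus S (VB a) y = (case y of VB b \<Rightarrow> VB (bplus S a b) | _ \<Rightarrow> undefined)"
| "vplus S (VF f) y = (case y of VF g \<Rightarrow> VF (\<lambda>i. vplus S (f i) (g i)) | _ \<Rightarrow> undefined)"
| "vplus S (VP a b) y = (case y of VP c d \<Rightarrow> VP (vplus S a c) (vplus S b d) | _ \<Rightarrow> undefined)"
| "vplus S (VInl x) y = (case y of VCl x' \<Rightarrow> VInl (vplus S x x') | VCr _ \<Rightarrow> VInl x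
      | VSl z \<Rightarrow> VInl z | VSr z \<Rightarrow> VInr z | VNull \<Rightarrow> VInl x | _ \<Rightarrow> undefined)"
| "vplus S (VInr x) y = (case y of VCl _ \<Rightarrow> VInr x | VCr x' \<Rightarrow> VInr (vplus S x x')
      | VSl z \<Rightarrow> VInl z | VSr z \<Rightarrow> VInr z | VNull \<Rightarrow> VInr x | _ \<Rightarrow> undefined)"
| "vplus S (VCl x) y = undefined"
| "vplus S (VCr x) y = undefined"
| "vplus S (VSl x) y = undefined"
| "vplus S (VSr x) y = undefined"
| "vplus S VNull y = undefined"
| "vplus S VUnit y = VUnit"

primrec vminus :: "('b, 's, 'p) setting \<Rightarrow> ('b, 'p) v \<Rightarrow> ('b, 'p) v \<Rightarrow> ('b, 'p) v" where
  "vminus S (VB a) y = (case y of VB b \<Rightarrow> VB (bminus S a b) | _ \<Rightarrow> undefined)"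
| "vminus S (VF f) y = (case y of VF g \<Rightarrow> VF (\<lambda>i. vminus S (f i) (g i)) | _ \<Rightarrow> undefined)"
| "vminus S (VP a b) y = (case y of VP c d \<Rightarrow> VP (vminus S a c) (vminus S b d) | _ \<Rightarrow> undefined)"
| "vminus S (VInl x) y = (case y of VInl z \<Rightarrow> VCl (vminus S x z) | VInr z \<Rightarrow> VSl x | _ \<Rightarrow> undefined)"
| "vminus S (VInr x) y = (case y of VInl z \<Rightarrow> VSr x | VInr z \<Rightarrow> VCr (vminus S x z) | _ \<Rightarrow> undefined)"
| "vminus S (VCl x) y = undefined"
| "vminus S (VCr x) y = undefined"
| "vminus S (VSl x) y = undefined"
| "vminus S (VSr x) y = undefined"
| "vminus S VNull y = undefined"
| "vminus S VUnit y = VUnit"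

text \<open>Shape annotations needed to build extensional F_s values are recorded
  explicitly: Map s, Zip s, Reshape s2 r, Replicate s, Tp s1 s2, Filter s p.
  A user-defined operation Op f C i d carries its function f and its incrementalization
  (C, i, d).\<close>
datatype ('b, 's, 'p) exp =
    Seq "('b, 's, 'p) exp" "('b, 's, 'p) exp"
  | Par "('b, 's, 'p) exp" "('b, 's, 'p) exp"
  | Id | Dup | Fst | Snd
  | Cst "('b, 'p) v"
  | Plus
  | Op "('b, 'p) v \<Rightarrow> ('b, 'p) v" "('b, 'p) v set"
       "('b, 'p) v \<Rightarrow> ('b, 'p) v \<times> ('b, 'p) v"
       "('b, 'p) v \<Rightarrow> ('b, 'p) v \<Rightarrow> ('b, 'p) v \<times> ('b, 'p) v"
  | Map 's "('b, 's, 'p) exp"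
  | Zip 's
  | Get 'p
  | SetE 'p
  | Reshape 's "'p \<Rightarrow> 'p"
  | Replicate 's
  | Tp 's 's
  | Filter 's "'p \<Rightarrow> bool"
  | Inl | Inr | Fuse | Distr
  | Alt "('b, 's, 'p) exp" "('b, 's, 'p) exp"

primrec den :: "('b, 's, 'p) setting \<Rightarrow> ('b, 's, 'p) exp \<Rightarrow> ('b, 'p) v \<Rightarrow> ('b, 'p) v" where
  "den S (Seq e1 e2) x = den S e2 (den S e1 x)"
| "den S (Par e1 e2) x = VP (den S e1 (vfst x)) (den S e2 (vsnd x))"
| "den S Id x = x"
| "den S Dup x = VP x x"
| "den S Fst x = vfst x"
| "den S Snd x = vsnd x"
| "den S (Cst c) x = c"
| "den S Plus x = vplus S (vfst x) (vsnd x)"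
| "den S (Op f C i d) x = f x"
| "den S (Map s e) x = restr S s (\<lambda>j. den S e (app x j))"
| "den S (Zip s) x = restr S s (\<lambda>j. VP (app (vfst x) j) (app (vsnd x) j))"
| "den S (Get i) x = app x i"
| "den S (SetE i) x = VF (\<lambda>j. if i = j then vfst x else app (vsnd x) j)"
| "den S (Reshape s r) x = restr S s (\<lambda>j. app x (r j))"
| "den S (Replicate s) x = restr S s (\<lambda>j. x)"
| "den S (Tp s1 s2) x = restr S s2 (\<lambda>i. restr S s1 (\<lambda>j. app (app x j) i))"
| "den S (Filter s p) x = restr S s (\<lambda>j. if p j then app (vsnd x) j else vfst x)"
| "den S Inl x = VInl x"
| "den S Inr x = VInr x"
| "den S Fuse x = (case x of VInl y \<Rightarrow> y | VInr y \<Rightarrow> y | _ \<Rightarrow> undefined)"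
| "den S Distr x = (case vsnd x of VInl y \<Rightarrow> VInl (VP (vfst x) y)
                                 | VInr y \<Rightarrow> VInr (VP (vfst x) y) | _ \<Rightarrow> undefined)"
| "den S (Alt e1 e2) x = (case x of VInl y \<Rightarrow> VInl (den S e1 y)
                                   | VInr y \<Rightarrow> VInr (den S e2 y) | _ \<Rightarrow> undefined)"

primrec ini :: "('b, 's, 'p) setting \<Rightarrow> ('b, 's, 'p) exp \<Rightarrow> ('b, 'p) v \<Rightarrow> ('b, 'p) v \<times> ('b, 'p) v" where
  "ini S (Seq f g) x = (let (y, c1) = ini S f x; (z, c2) = ini S g y in (z, VP c1 c2))"
| "ini S (Par f g) x = (let (y1, c1) = ini S f (vfst x); (y2, c2) = ini S g (vsnd x)
                        in (VP y1 y2, VP c1 c2))"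
| "ini S Id x = (den S Id x, VUnit)"
| "ini S Dup x = (den S Dup x, VUnit)"
| "ini S Fst x = (den S Fst x, VUnit)"
| "ini S Snd x = (den S Snd x, VUnit)"
| "ini S (Cst c) x = (c, VUnit)"
| "ini S Plus x = (vplus S (vfst x) (vsnd x), VUnit)"
| "ini S (Op f C i d) x = i x"
| "ini S (Map s f) x = (restr S s (\<lambda>j. fst (ini S f (app x j))), restr S s (\<lambda>j. snd (ini S f (app x j))))"
| "ini S (Zip s) x = (den S (Zip s) x, VUnit)"
| "ini S (Get i) x = (den S (Get i) x, VUnit)"
| "ini S (SetE i) x = (den S (SetE i) x, VUnit)"
| "ini S (Reshape s r) x = (den S (Reshape s r) x, VUnit)"
| "ini S (Replicate s) x = (den S (Replicate s) x, VUnit)"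
| "ini S (Tp s1 s2) x = (den S (Tp s1 s2) x, VUnit)"
| "ini S (Filter s p) x = (den S (Filter s p) x, VUnit)"
| "ini S Inl x = (VInl x, VUnit)"
| "ini S Inr x = (VInr x, VUnit)"
| "ini S Fuse x = ((case x of VInl y \<Rightarrow> y | VInr y \<Rightarrow> y | _ \<Rightarrow> undefined), x)"
| "ini S Distr x = (den S Distr x, x)"
| "ini S (Alt f g) x = (case x of
      VInl a \<Rightarrow> (let (y, c) = ini S f a in (VInl y, VInl (VP c y)))
    | VInr a \<Rightarrow> (let (y, c) = ini S g a in (VInr y, VInr (VP c y)))
    | _ \<Rightarrow> undefined)"

primrec dif :: "('b, 's, 'p) setting \<Rightarrow> ('b, 's, 'p) exp \<Rightarrow> ('b, 'p) v \<Rightarrow> ('b, 'p) v \<Rightarrow> ('b, 'p) v \<times> ('b, 'p) v" where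
  "dif S (Seq f g) x' c = (let (y', c1') = dif S f x' (vfst c); (z', c2') = dif S g y' (vsnd c)
                           in (z', VP c1' c2'))"
| "dif S (Par f g) x' c = (let (y1', c1') = dif S f (vfst x') (vfst c); (y2', c2') = dif S g (vsnd x') (vsnd c)
                           in (VP y1' y2', VP c1' c2'))"
| "dif S Id x' c = (den S Id x', VUnit)"
| "dif S Dup x' c = (den S Dup x', VUnit)"
| "dif S Fst x' c = (den S Fst x', VUnit)"
| "dif S Snd x' c = (den S Snd x', VUnit)"
| "dif S (Cst k) x' c = (vminus S k k, VUnit)"
| "dif S Plus x' c = (vplus S (vfst x') (vsnd x'), VUnit)"
| "dif S (Op f C i d) x' c = d x' c"
| "dif S (Map s f) x' c = (restr S s (\<lambda>j. fst (dif S f (app x' j) (app c j))),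
                           restr S s (\<lambda>j. snd (dif S f (app x' j) (app c j))))"
| "dif S (Zip s) x' c = (den S (Zip s) x', VUnit)"
| "dif S (Get i) x' c = (den S (Get i) x', VUnit)"
| "dif S (SetE i) x' c = (den S (SetE i) x', VUnit)"
| "dif S (Reshape s r) x' c = (den S (Reshape s r) x', VUnit)"
| "dif S (Replicate s) x' c = (den S (Replicate s) x', VUnit)"
| "dif S (Tp s1 s2) x' c = (den S (Tp s1 s2) x', VUnit)"
| "dif S (Filter s p) x' c = (den S (Filter s p) x', VUnit)"
| "dif S Inl x' c = (VCl x', VUnit)"
| "dif S Inr x' c = (VCr x', VUnit)"
| "dif S Fuse x' c = (case x' of
      VCl a' \<Rightarrow> (case c of VInl x \<Rightarrow> (a', VInl (vplus S x a')) | VInr y \<Rightarrow> (vminus S y y, VInr y) | _ \<Rightarrow> undefined)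
    | VCr b' \<Rightarrow> (case c of VInl x \<Rightarrow> (vminus S x x, VInl x) | VInr y \<Rightarrow> (b', VInr (vplus S y b')) | _ \<Rightarrow> undefined)
    | VSl x \<Rightarrow> (case c of VInl x0 \<Rightarrow> (vminus S x x0, VInl x) | VInr x0 \<Rightarrow> (vminus S x x0, VInl x) | _ \<Rightarrow> undefined)
    | VSr y \<Rightarrow> (case c of VInl y0 \<Rightarrow> (vminus S y y0, VInr y) | VInr y0 \<Rightarrow> (vminus S y y0, VInr y) | _ \<Rightarrow> undefined)
    | VNull \<Rightarrow> (case c of VInl x \<Rightarrow> (vminus S x x, VInl x) | VInr x \<Rightarrow> (vminus S x x, VInr x) | _ \<Rightarrow> undefined)
    | _ \<Rightarrow> undefined)"
| "dif S Distr x' c = (let a' = vfst x'; a = vfst c; a1 = vplus S a a' in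
    (case vsnd x' of
      VCl y' \<Rightarrow> (case vsnd c of
          VInl y \<Rightarrow> (VCl (VP a' y'), VP a1 (VInl (vplus S y y')))
        | VInr y \<Rightarrow> (VCr (VP a' (vminus S y y)), VP a1 (VInr y)) | _ \<Rightarrow> undefined)
    | VCr y' \<Rightarrow> (case vsnd c of
          VInl y \<Rightarrow> (VCl (VP a' (vminus S y y)), VP a1 (VInl y))
        | VInr y \<Rightarrow> (VCr (VP a' y'), VP a1 (VInr (vplus S y y'))) | _ \<Rightarrow> undefined)
    | VSl y \<Rightarrow> (VSl (VP a1 y), VP a1 (VInl y))
    | VSr y \<Rightarrow> (VSr (VP a1 y), VP a1 (VInr y))
    | VNull \<Rightarrow> (case vsnd c of
          VInl y \<Rightarrow> (VCl (VP a' (vminus S y y)), VP a1 (VInl y))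
        | VInr y \<Rightarrow> (VCr (VP a' (vminus S y y)), VP a1 (VInr y)) | _ \<Rightarrow> undefined)
    | _ \<Rightarrow> undefined))"
| "dif S (Alt f g) x' z = (case x' of
      VCl a' \<Rightarrow> (case z of
          VInl cy \<Rightarrow> (let (y', c') = dif S f a' (vfst cy) in (VCl y', VInl (VP c' (vplus S (vsnd cy) y'))))
        | VInr _ \<Rightarrow> (VNull, z) | _ \<Rightarrow> undefined)
    | VCr a' \<Rightarrow> (case z of
          VInl _ \<Rightarrow> (VNull, z)
        | VInr cy \<Rightarrow> (let (y', c') = dif S g a' (vfst cy) in (VCr y', VInr (VP c' (vplus S (vsnd cy) y'))))
        | _ \<Rightarrow> undefined)
    | VSl a \<Rightarrow> (let (y, c) = ini S f a in (case z of
          VInl cy \<Rightarrow> (VCl (vminus S y (vsnd cy)), VInl (VP c y))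
        | VInr _ \<Rightarrow> (VSl y, VInl (VP c y)) | _ \<Rightarrow> undefined))
    | VSr a \<Rightarrow> (let (y, c) = ini S g a in (case z of
          VInl _ \<Rightarrow> (VSr y, VInr (VP c y))
        | VInr cy \<Rightarrow> (VCr (vminus S y (vsnd cy)), VInr (VP c y)) | _ \<Rightarrow> undefined))
    | VNull \<Rightarrow> (VNull, z)
    | _ \<Rightarrow> undefined)"

definition consistent :: "('b, 's, 'p) setting \<Rightarrow> 's ty \<Rightarrow> (('b, 'p) v \<Rightarrow> ('b, 'p) v)
    \<Rightarrow> (('b, 'p) v \<Rightarrow> ('b, 'p) v \<times> ('b, 'p) v) \<Rightarrow> (('b, 'p) v \<Rightarrow> ('b, 'p) v \<Rightarrow> ('b, 'p) v \<times> ('b, 'p) v) \<Rightarrow> bool" where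
  "consistent S A f i d \<longleftrightarrow> (\<forall>x\<in>vals S A. \<forall>x'\<in>dvals S A.
      fst (i x) = f x \<and>
      f (vplus S x x') = vplus S (f x) (fst (d x' (snd (i x)))) \<and>
      snd (i (vplus S x x')) = snd (d x' (snd (i x))))"

definition user_op :: "('b, 's, 'p) setting \<Rightarrow> 's ty \<Rightarrow> 's ty \<Rightarrow> (('b, 'p) v \<Rightarrow> ('b, 'p) v) \<Rightarrow> ('b, 'p) v set
    \<Rightarrow> (('b, 'p) v \<Rightarrow> ('b, 'p) v \<times> ('b, 'p) v) \<Rightarrow> (('b, 'p) v \<Rightarrow> ('b, 'p) v \<Rightarrow> ('b, 'p) v \<times> ('b, 'p) v) \<Rightarrow> bool" where
  "user_op S A B f C i d \<longleftrightarrow>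
     (\<forall>x\<in>vals S A. f x \<in> vals S B) \<and>
     (\<forall>x\<in>vals S A. fst (i x) \<in> vals S B \<and> snd (i x) \<in> C) \<and>
     (\<forall>x'\<in>dvals S A. \<forall>c\<in>C. fst (d x' c) \<in> dvals S B \<and> snd (d x' c) \<in> C) \<and>
     consistent S A f i d"

definition plus_ok :: "('b, 's, 'p) setting \<Rightarrow> 's ty \<Rightarrow> bool" where
  "plus_ok S A \<longleftrightarrow> vals S A = dvals S A \<and>
     (\<forall>x\<in>vals S A. \<forall>y\<in>vals S A. \<forall>z\<in>vals S A. vplus S (vplus S x y) z = vplus S x (vplus S y z)) \<and>
     (\<forall>x\<in>vals S A. \<forall>y\<in>vals S A. vplus S x y = vplus S y x)"

inductive wt :: "('b, 's, 'p) setting \<Rightarrow> ('b, 's, 'p) exp \<Rightarrow> 's ty \<Rightarrow> 's ty \<Rightarrow> bool" for S where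
  wt_Seq: "wt S e1 A B \<Longrightarrow> wt S e2 B C \<Longrightarrow> wt S (Seq e1 e2) A C"
| wt_Par: "wt S e1 A B \<Longrightarrow> wt S e2 C D \<Longrightarrow> wt S (Par e1 e2) (TProd A C) (TProd B D)"
| wt_Id: "wt S Id A A"
| wt_Dup: "wt S Dup A (TProd A A)"
| wt_Fst: "wt S Fst (TProd A B) A"
| wt_Snd: "wt S Snd (TProd A B) B"
| wt_Cst: "c \<in> vals S A \<Longrightarrow> wt S (Cst c) B A"
| wt_Plus: "plus_ok S A \<Longrightarrow> wt S Plus (TProd A A) A"
| wt_Op: "user_op S A B f C i d \<Longrightarrow> wt S (Op f C i d) A B"
| wt_Map: "wt S e A B \<Longrightarrow> wt S (Map s e) (TF s A) (TF s B)"
| wt_Zip: "wt S (Zip s) (TProd (TF s A) (TF s B)) (TF s (TProd A B))"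
| wt_Get: "i \<in> pos S s \<Longrightarrow> wt S (Get i) (TF s A) A"
| wt_Set: "i \<in> pos S s \<Longrightarrow> wt S (SetE i) (TProd A (TF s A)) (TF s A)"
| wt_Reshape: "r ` pos S s2 \<subseteq> pos S s1 \<Longrightarrow> wt S (Reshape s2 r) (TF s1 A) (TF s2 A)"
| wt_Replicate: "wt S (Replicate s) A (TF s A)"
| wt_Tp: "wt S (Tp s1 s2) (TF s1 (TF s2 A)) (TF s2 (TF s1 A))"
| wt_Filter: "wt S (Filter s p) (TProd A (TF s A)) (TF s A)"
| wt_Inl: "wt S Inl A (TSum A B)"
| wt_Inr: "wt S Inr B (TSum A B)"
| wt_Fuse: "wt S Fuse (TSum A A) A"
| wt_Distr: "wt S Distr (TProd A (TSum B C)) (TSum (TProd A B) (TProd A C))"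
| wt_Alt: "wt S e1 A B \<Longrightarrow> wt S e2 C D \<Longrightarrow> wt S (Alt e1 e2) (TSum A C) (TSum B D)"

end

theory Submission
  imports Defs
begin

text \<open>Consistency alone is not an inductive invariant:
  the laws of oplus and ominus hold only on well-typed arguments, so the invariant also records
  that the denotation maps values of A to values of B and the derivative maps changes of A to
  changes of B.  Sequencing, products, map and the alternative inherit consistency from their
  components; the + case needs the interchange law
  (x oplus y) oplus (x' oplus y') = (x oplus x') oplus (y oplus y'), which is where associativity
  and commutativity enter; and the cases that replace a value wholesale (cst, fuse, distr and a
  change of branch in the alternative) rely on x oplus (y ominus x) = y, lifted from the base
  type to all object types.\<close>

lemma VF_in_vals_TF [simp]:
  "VF h \<in> vals S (TF s A) \<longleftrightarrow>
     (\<forall>i\<in>pos S s. h i \<in> vals S A) \<and> (\<forall>i. i \<notin> pos S s \<longrightarrow> h i = VUnit)"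
  by auto

lemma VF_in_dvals_TF [simp]:
  "VF h \<in> dvals S (TF s A) \<longleftrightarrow>
     (\<forall>i\<in>pos S s. h i \<in> dvals S A) \<and> (\<forall>i. i \<notin> pos S s \<longrightarrow> h i = VUnit)"
  by auto

lemma vals_TFE [elim!]:
  assumes "x \<in> vals S (TF s A)"
  obtains h where "x = VF h" "\<forall>i\<in>pos S s. h i \<in> vals S A"
    "\<forall>i. i \<notin> pos S s \<longrightarrow> h i = VUnit"
  using assms by auto

lemma dvals_TFE [elim!]:
  assumes "x \<in> dvals S (TF s A)"
  obtains h where "x = VF h" "\<forall>i\<in>pos S s. h i \<in> dvals S A"
    "\<forall>i. i \<notin> pos S s \<longrightarrow> h i = VUnit"
  using assms by auto

lemma app_vplus:
  "x \<in> vals S (TF s A) \<Longrightarrow> x' \<in> dvals S (TF s A) \<Longrightarrow>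
    app (vplus S x x') i = vplus S (app x i) (app x' i)"
  by auto

lemma assoc_comm_interchange:
  assumes closed: "\<And>x y. x \<in> X \<Longrightarrow> y \<in> X \<Longrightarrow> f x y \<in> X"
    and assoc: "\<And>x y z. x \<in> X \<Longrightarrow> y \<in> X \<Longrightarrow> z \<in> X \<Longrightarrow> f (f x y) z = f x (f y z)"
    and comm: "\<And>x y. x \<in> X \<Longrightarrow> y \<in> X \<Longrightarrow> f x y = f y x"
    and X: "a \<in> X" "a' \<in> X" "b \<in> X" "b' \<in> X"
  shows "f (f a a') (f b b') = f (f a b) (f a' b')"
proof -
  have "f (f a a') (f b b') = f a (f (f a' b) b')" using X by (simp add: assoc closed)
  also have "\<dots> = f a (f (f b a') b')" using X by (simp add: comm)
  also have "\<dots> = f (f a b) (f a' b')" using X by (simp add: assoc closed)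
  finally show ?thesis .
qed

locale change_structure =
  fixes S :: "('b, 's, 'p) setting"
  assumes bplus_closed: "\<forall>a\<in>beta S. \<forall>a'\<in>dbeta S. bplus S a a' \<in> beta S"
      and bminus_closed: "\<forall>a\<in>beta S. \<forall>b\<in>beta S. bminus S a b \<in> dbeta S"
      and bplus_bminus: "\<forall>a\<in>beta S. \<forall>b\<in>beta S. bplus S a (bminus S b a) = b"
begin

lemma vplus_in_vals: "x \<in> vals S A \<Longrightarrow> x' \<in> dvals S A \<Longrightarrow> vplus S x x' \<in> vals S A"
proof (induction A arbitrary: x x')
  case TB then show ?case using bplus_closed by auto
next
  case (TF s A) then show ?case by (auto 0 3)
qed auto

lemma vminus_in_dvals: "x \<in> vals S A \<Longrightarrow> y \<in> vals S A \<Longrightarrow> vminus S x y \<in> dvals S A"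
proof (induction A arbitrary: x y)
  case TB then show ?case using bminus_closed by auto
next
  case (TF s A) then show ?case by (auto 0 3)
qed auto

lemma vplus_vminus: "x \<in> vals S A \<Longrightarrow> y \<in> vals S A \<Longrightarrow> vplus S x (vminus S y x) = y"
proof (induction A arbitrary: x y)
  case TB then show ?case using bplus_bminus by auto
next
  case (TF s A) then show ?case by (auto simp: fun_eq_iff) (metis vplus.simps(11))
qed auto

text \<open>Consistency states the initialization law only alongside some change; the null
  change x ominus x supplies one.\<close>

lemma consistent_ini_fst:
  assumes "consistent S A f i d" and "x \<in> vals S A"
  shows "fst (i x) = f x"
  using assms vminus_in_dvals[OF assms(2) assms(2)] unfolding consistent_def by blast

definition typed_consistent :: "('b, 's, 'p) exp \<Rightarrow> 's ty \<Rightarrow> 's ty \<Rightarrow> bool" where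
  "typed_consistent e A B \<longleftrightarrow>
     (\<forall>x\<in>vals S A. den S e x \<in> vals S B \<and> fst (ini S e x) = den S e x \<and>
        (\<forall>x'\<in>dvals S A. fst (dif S e x' (snd (ini S e x))) \<in> dvals S B \<and>
           den S e (vplus S x x') = vplus S (den S e x) (fst (dif S e x' (snd (ini S e x)))) \<and>
           snd (ini S e (vplus S x x')) = snd (dif S e x' (snd (ini S e x)))))"

lemma typed_consistentD:
  assumes "typed_consistent e A B" and "x \<in> vals S A"
  shows "den S e x \<in> vals S B"
    and "fst (ini S e x) = den S e x"
    and "x' \<in> dvals S A \<Longrightarrow> fst (dif S e x' (snd (ini S e x))) \<in> dvals S B"
    and "x' \<in> dvals S A \<Longrightarrow>
      den S e (vplus S x x') = vplus S (den S e x) (fst (dif S e x' (snd (ini S e x))))"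
    and "x' \<in> dvals S A \<Longrightarrow> snd (ini S e (vplus S x x')) = snd (dif S e x' (snd (ini S e x)))"
  using assms unfolding typed_consistent_def by blast+

lemma typed_consistent_Id: "typed_consistent Id A A"
  and typed_consistent_Dup: "typed_consistent Dup A (TProd A A)"
  and typed_consistent_Fst: "typed_consistent Fst (TProd A B) A"
  and typed_consistent_Snd: "typed_consistent Snd (TProd A B) B"
  and typed_consistent_Inl: "typed_consistent Inl A (TSum A B)"
  and typed_consistent_Inr: "typed_consistent Inr B (TSum A B)"
  and typed_consistent_Get: "i \<in> pos S s \<Longrightarrow> typed_consistent (Get i) (TF s A) A"
  and typed_consistent_Zip: "typed_consistent (Zip s) (TProd (TF s A) (TF s B)) (TF s (TProd A B))"
  and typed_consistent_SetE: "i \<in> pos S s \<Longrightarrow> typed_consistent (SetE i) (TProd A (TF s A)) (TF s A)"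
  and typed_consistent_Reshape:
    "r ` pos S s2 \<subseteq> pos S s1 \<Longrightarrow> typed_consistent (Reshape s2 r) (TF s1 A) (TF s2 A)"
  and typed_consistent_Replicate: "typed_consistent (Replicate s) A (TF s A)"
  and typed_consistent_Filter: "typed_consistent (Filter s p) (TProd A (TF s A)) (TF s A)"
  unfolding typed_consistent_def
  by (auto simp: restr_def fun_eq_iff simp del: vals.simps(2) dvals.simps(2))

lemma typed_consistent_Tp: "typed_consistent (Tp s1 s2) (TF s1 (TF s2 A)) (TF s2 (TF s1 A))"
  unfolding typed_consistent_def
  by (auto simp: restr_def fun_eq_iff simp del: vals.simps(2) dvals.simps(2)) (metis app_vplus)

lemma typed_consistent_Cst: "c \<in> vals S A \<Longrightarrow> typed_consistent (Cst c) B A"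
  unfolding typed_consistent_def by (simp add: vminus_in_dvals vplus_vminus)

lemma typed_consistent_Plus:
  assumes "plus_ok S A"
  shows "typed_consistent Plus (TProd A A) A"
proof -
  have vals_eq: "vals S A = dvals S A" using assms unfolding plus_ok_def by blast
  then have closed: "\<And>x y. x \<in> vals S A \<Longrightarrow> y \<in> vals S A \<Longrightarrow> vplus S x y \<in> vals S A"
    using vplus_in_vals by blast
  have "vplus S (vplus S a a') (vplus S b b') = vplus S (vplus S a b) (vplus S a' b')"
    if "a \<in> vals S A" "a' \<in> vals S A" "b \<in> vals S A" "b' \<in> vals S A" for a a' b b'
    using assoc_comm_interchange[where f = "vplus S", OF closed _ _ that] assms
    unfolding plus_ok_def by blast
  then show ?thesis unfolding typed_consistent_def using closed vals_eq by auto
qed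

lemma typed_consistent_Op:
  assumes "user_op S A B f C i d"
  shows "typed_consistent (Op f C i d) A B"
proof -
  have "consistent S A f i d" using assms unfolding user_op_def by blast
  then have "fst (i x) = f x" if "x \<in> vals S A" for x using that by (rule consistent_ini_fst)
  then show ?thesis using assms unfolding user_op_def typed_consistent_def consistent_def by simp
qed

lemma typed_consistent_Fuse: "typed_consistent Fuse (TSum A A) A"
  unfolding typed_consistent_def by (auto simp: vplus_in_vals vminus_in_dvals vplus_vminus)

lemma typed_consistent_Distr:
  "typed_consistent Distr (TProd A (TSum B C)) (TSum (TProd A B) (TProd A C))"
  unfolding typed_consistent_def by (auto simp: Let_def vplus_in_vals vminus_in_dvals vplus_vminus)

lemma typed_consistent_Seq:
  assumes "typed_consistent f A B" and "typed_consistent g B C"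
  shows "typed_consistent (Seq f g) A C"
  unfolding typed_consistent_def
  by (simp add: split_def Let_def typed_consistentD[OF assms(1)] typed_consistentD[OF assms(2)]
      vplus_in_vals)

lemma typed_consistent_Par:
  assumes "typed_consistent f A B" and "typed_consistent g C D"
  shows "typed_consistent (Par f g) (TProd A C) (TProd B D)"
  unfolding typed_consistent_def
  by (auto simp add: split_def Let_def typed_consistentD[OF assms(1)] typed_consistentD[OF assms(2)])

lemma typed_consistent_Map:
  assumes "typed_consistent f A B"
  shows "typed_consistent (Map s f) (TF s A) (TF s B)"
  unfolding typed_consistent_def
  by (auto simp: restr_def typed_consistentD[OF assms] fun_eq_iff
      simp del: vals.simps(2) dvals.simps(2))

lemma typed_consistent_Alt:
  assumes "typed_consistent f A B" and "typed_consistent g C D"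
  shows "typed_consistent (Alt f g) (TSum A C) (TSum B D)"
  unfolding typed_consistent_def
  by (auto simp: split_def Let_def typed_consistentD[OF assms(1)] typed_consistentD[OF assms(2)]
      vplus_in_vals vminus_in_dvals[of _ B] vminus_in_dvals[of _ D] vplus_vminus[of _ B] vplus_vminus[of _ D])

lemma wt_consistent:
  assumes "wt S e A B"
  shows "consistent S A (den S e) (ini S e) (dif S e)"
proof -
  from assms have "typed_consistent e A B"
    by (induction rule: wt.induct)
      (auto intro: typed_consistent_Seq typed_consistent_Par typed_consistent_Id
        typed_consistent_Dup typed_consistent_Fst typed_consistent_Snd typed_consistent_Cst
        typed_consistent_Plus typed_consistent_Op typed_consistent_Map typed_consistent_Zip
        typed_consistent_Get typed_consistent_SetE typed_consistent_Reshape
        typed_consistent_Replicate typed_consistent_Tp typed_consistent_Filter typed_consistent_Inl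
        typed_consistent_Inr typed_consistent_Fuse typed_consistent_Distr typed_consistent_Alt)
  then show ?thesis unfolding typed_consistent_def consistent_def by blast
qed

end

theorem lemma5p5:
  fixes S :: "('b, 's, 'p) setting" and e :: "('b, 's, 'p) exp" and A B :: "'s ty"
  assumes plus_closed: "\<forall>a\<in>beta S. \<forall>a'\<in>dbeta S. bplus S a a' \<in> beta S"
      and minus_closed: "\<forall>a\<in>beta S. \<forall>b\<in>beta S. bminus S a b \<in> dbeta S"
      and plus_minus: "\<forall>a\<in>beta S. \<forall>b\<in>beta S. bplus S a (bminus S b a) = b"
      and typed: "wt S e A B"
  shows "\<forall>x\<in>vals S A. \<forall>x'\<in>dvals S A.
           fst (ini S e x) = den S e x \<and>
           den S e (vplus S x x') = vplus S (den S e x) (fst (dif S e x' (snd (ini S e x)))) \<and>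
           snd (ini S e (vplus S x x')) = snd (dif S e x' (snd (ini S e x)))"
proof -
  interpret change_structure S
    using plus_closed minus_closed plus_minus by unfold_locales
  show ?thesis using wt_consistent[OF typed] unfolding consistent_def .
qed

end
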